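(* Let $n_1\geq n_2\geq 2$ be integers and let $E$ be the edge set of $\textsc{Grid}(n_1,n_2)$. Define $g:E\to[2n_1n_2-n_1-n_2]$ by $$g(\{(i,j),(i,j+1)\})=(i-1)(2n_2-1)+j\quad\text{for }(i,j)\in[n_1]\times[n_2-1],$$ $$g(\{(i,j),(i+1,j)\})=(n_1-i)(2n_2-1)+1-j\quad\text{for }(i,j)\in[n_1-1]\times[n_2].$$ Then $g$ is a $Q_2$-magic edge labeling of $\textsc{Grid}(n_1,n_2)$ with $Q_2$-magic sum $(2n_1-1)(2n_2-1)+1$.
   Context: $[k]=\{1,\ldots,k\}$. $\textsc{Grid}(n_1,n_2)$ is the graph with vertex set $[n_1]\times[n_2]$ in which $(i,j)$ and $(i',j')$ are adjacent iff $|i-i'|+|j-j'|=1$; it has $2n_1n_2-n_1-n_2$ edges. $Q_2$ is the 4-cycle $\textsc{Grid}(2,2)$. A bijection $g:E\to\{1,\ldots,|E|\}$ on the edge set of a graph $G=(V,E)$ is an $H$-magic edge labeling if there is a constant $c'$ (the $H$-magic sum) with $\sum_{e\in E(H')}g(e)=c'$ for every subgraph $H'\subseteq G$ isomorphic to $H$. *)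

theory Defs
  imports Main
begin

text \<open>Simple graphs: a vertex set together with a set of edges, each edge a 2-element set.\<close>
type_synonym 'a graph = "'a set \<times> 'a set set"

definition grid_V :: "nat \<Rightarrow> nat \<Rightarrow> (nat \<times> nat) set" where
  "grid_V n1 n2 = {1..n1} \<times> {1..n2}"

definition grid_E :: "nat \<Rightarrow> nat \<Rightarrow> (nat \<times> nat) set set" where
  "grid_E n1 n2 = {{u, v} | u v. u \<in> grid_V n1 n2 \<and> v \<in> grid_V n1 n2 \<and>
      \<bar>int (fst u) - int (fst v)\<bar> + \<bar>int (snd u) - int (snd v)\<bar> = 1}"

definition Grid :: "nat \<Rightarrow> nat \<Rightarrow> (nat \<times> nat) graph" where
  "Grid n1 n2 = (grid_V n1 n2, grid_E n1 n2)"

definition Q2 :: "(nat \<times> nat) graph" where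
  "Q2 = Grid 2 2"

definition is_subgraph :: "'a graph \<Rightarrow> 'a graph \<Rightarrow> bool" where
  "is_subgraph H G \<longleftrightarrow> fst H \<subseteq> fst G \<and> snd H \<subseteq> snd G \<and> (\<forall>e\<in>snd H. e \<subseteq> fst H)"

definition graph_iso :: "'a graph \<Rightarrow> 'b graph \<Rightarrow> bool" where
  "graph_iso H G \<longleftrightarrow> (\<exists>f. bij_betw f (fst H) (fst G) \<and>
      (\<forall>x\<in>fst H. \<forall>y\<in>fst H. {x, y} \<in> snd H \<longleftrightarrow> {f x, f y} \<in> snd G))"

definition magic_edge_labeling :: "'b graph \<Rightarrow> 'a graph \<Rightarrow> ('a set \<Rightarrow> nat) \<Rightarrow> nat \<Rightarrow> bool" where
  "magic_edge_labeling H G g c \<longleftrightarrow>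
     bij_betw g (snd G) {1..card (snd G)} \<and>
     (\<forall>H'. is_subgraph H' G \<and> graph_iso H H' \<longrightarrow> (\<Sum>e\<in>snd H'. g e) = c)"

end

theory Submission
  imports Defs
begin

text \<open>A copy of \<open>Q\<^sub>2\<close> in the grid is a 4-cycle, and every 4-cycle of the grid bounds a unit
square with lower-left corner \<open>(i, j)\<close>. With \<open>B = 2n\<^sub>2 - 1\<close>, its horizontal edges are labelled
\<open>(i - 1)B + j\<close> and \<open>iB + j\<close> and its vertical edges \<open>(n\<^sub>1 - i)B + 1 - j\<close> and \<open>(n\<^sub>1 - i)B - j\<close>,
so \<open>i\<close> and \<open>j\<close> cancel in the sum \<open>(2n\<^sub>1 - 1)B + 1\<close>.
For bijectivity, write a label as \<open>qB + r + 1\<close> with \<open>r < B\<close>: it is the label of the horizontal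
edge \<open>{(q + 1, r + 1), (q + 1, r + 2)}\<close> if \<open>r < n\<^sub>2 - 1\<close>, and of the vertical edge between rows
\<open>n\<^sub>1 - q - 1\<close> and \<open>n\<^sub>1 - q\<close> in column \<open>B - r\<close> otherwise. So the labels cover
\<open>[1, 2n\<^sub>1n\<^sub>2 - n\<^sub>1 - n\<^sub>2]\<close>, and since the grid has at most that many edges, the labeling is a
bijection.\<close>

lemma bij_betw_interval_if_card_le:
  assumes "finite E" "card E \<le> N" "f ` E = {1..N}"
  shows "bij_betw f E {1..card E}"
proof -
  have "card E = N" using card_image_le[OF assms(1), of f] assms(2,3) by simp
  moreover have "inj_on f E" using calculation assms by (simp add: inj_on_iff_eq_card)
  ultimately show ?thesis using assms(3) by (simp add: bij_betw_def)
qed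

definition grid_adj :: "nat \<times> nat \<Rightarrow> nat \<times> nat \<Rightarrow> bool" where
  "grid_adj u v \<longleftrightarrow> \<bar>int (fst u) - int (fst v)\<bar> + \<bar>int (snd u) - int (snd v)\<bar> = 1"

lemma grid_adj_iff:
  "grid_adj (a1, a2) (b1, b2) \<longleftrightarrow>
     (b1 = a1 + 1 \<and> b2 = a2) \<or> (a1 = b1 + 1 \<and> a2 = b2) \<or>
     (b2 = a2 + 1 \<and> a1 = b1) \<or> (a2 = b2 + 1 \<and> a1 = b1)"
  unfolding grid_adj_def by auto

lemma grid_adj_sym: "grid_adj u v \<Longrightarrow> grid_adj v u"
  unfolding grid_adj_def by auto

lemma grid_adjE:
  assumes "grid_adj u v"
  obtains (right) i j where "u = (i, j)" "v = (i, j + 1)"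
    | (left) i j where "v = (i, j)" "u = (i, j + 1)"
    | (down) i j where "u = (i, j)" "v = (i + 1, j)"
    | (up) i j where "v = (i, j)" "u = (i + 1, j)"
  using assms that by (cases u, cases v) (auto simp: grid_adj_iff)

lemma mem_grid_E_iff:
  "{p, q} \<in> grid_E n1 n2 \<longleftrightarrow> p \<in> grid_V n1 n2 \<and> q \<in> grid_V n1 n2 \<and> grid_adj p q"
proof
  assume "{p, q} \<in> grid_E n1 n2"
  then obtain u v where "{p, q} = {u, v}" "u \<in> grid_V n1 n2" "v \<in> grid_V n1 n2" "grid_adj u v"
    unfolding grid_E_def grid_adj_def by blast
  then show "p \<in> grid_V n1 n2 \<and> q \<in> grid_V n1 n2 \<and> grid_adj p q"
    by (auto simp: doubleton_eq_iff grid_adj_def)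
qed (unfold grid_E_def grid_adj_def, blast)

lemma grid_EE:
  assumes "e \<in> grid_E n1 n2"
  obtains p q where "e = {p, q}" "p \<in> grid_V n1 n2" "q \<in> grid_V n1 n2" "grid_adj p q"
  using assms unfolding grid_E_def grid_adj_def by blast

definition grid_hedges :: "nat \<Rightarrow> nat \<Rightarrow> (nat \<times> nat) set set" where
  "grid_hedges n1 n2 = (\<lambda>(i, j). {(i, j), (i, j + 1)}) ` ({1..n1} \<times> {1..n2 - 1})"

definition grid_vedges :: "nat \<Rightarrow> nat \<Rightarrow> (nat \<times> nat) set set" where
  "grid_vedges n1 n2 = (\<lambda>(i, j). {(i, j), (i + 1, j)}) ` ({1..n1 - 1} \<times> {1..n2})"

lemma grid_E_eq_hedges_Un_vedges: "grid_E n1 n2 = grid_hedges n1 n2 \<union> grid_vedges n1 n2"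
proof
  show "grid_hedges n1 n2 \<union> grid_vedges n1 n2 \<subseteq> grid_E n1 n2"
    by (auto simp: grid_hedges_def grid_vedges_def mem_grid_E_iff grid_V_def grid_adj_def)
  show "grid_E n1 n2 \<subseteq> grid_hedges n1 n2 \<union> grid_vedges n1 n2"
  proof
    fix e assume "e \<in> grid_E n1 n2"
    then obtain u v where e: "e = {u, v}" and uv: "u \<in> grid_V n1 n2" "v \<in> grid_V n1 n2" "grid_adj u v"
      by (rule grid_EE)
    from uv(3) show "e \<in> grid_hedges n1 n2 \<union> grid_vedges n1 n2"
    proof (cases rule: grid_adjE)
      case (right i j)
      then show ?thesis
        using uv unfolding e grid_hedges_def grid_V_def by (auto intro!: image_eqI[of _ _ "(i, j)"])
    next
      case (left i j)
      then show ?thesis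
        using uv unfolding e grid_hedges_def grid_V_def by (auto intro!: image_eqI[of _ _ "(i, j)"])
    next
      case (down i j)
      then show ?thesis
        using uv unfolding e grid_vedges_def grid_V_def by (auto intro!: image_eqI[of _ _ "(i, j)"])
    next
      case (up i j)
      then show ?thesis
        using uv unfolding e grid_vedges_def grid_V_def by (auto intro!: image_eqI[of _ _ "(i, j)"])
    qed
  qed
qed

lemma finite_grid_E: "finite (grid_E n1 n2)"
  by (simp add: grid_E_eq_hedges_Un_vedges grid_hedges_def grid_vedges_def)

lemma card_grid_E_le: "card (grid_E n1 n2) \<le> n1 * (n2 - 1) + (n1 - 1) * n2"
proof -
  have "card (grid_E n1 n2) \<le> card (grid_hedges n1 n2) + card (grid_vedges n1 n2)"
    unfolding grid_E_eq_hedges_Un_vedges by (rule card_Un_le)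
  also have "card (grid_hedges n1 n2) \<le> n1 * (n2 - 1)"
    unfolding grid_hedges_def
    using card_image_le[of "{1..n1} \<times> {1..n2 - 1}" "\<lambda>(i, j). {(i, j), (i, j + 1)}"]
    by (simp add: card_cartesian_product)
  also have "card (grid_vedges n1 n2) \<le> (n1 - 1) * n2"
    unfolding grid_vedges_def
    using card_image_le[of "{1..n1 - 1} \<times> {1..n2}" "\<lambda>(i, j). {(i, j), (i + 1, j)}"]
    by (simp add: card_cartesian_product)
  finally show ?thesis by simp
qed

lemma grid_edge_count_eq:
  fixes n1 n2 :: nat
  assumes "1 \<le> n1" "1 \<le> n2"
  shows "n1 * (n2 - 1) + (n1 - 1) * n2 = (n1 - 1) * (2 * n2 - 1) + (n2 - 1)"
proof -
  obtain k l where "n1 = Suc k" "n2 = Suc l" using assms by (metis Suc_le_D One_nat_def)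
  then show ?thesis by (simp add: algebra_simps)
qed

definition unit_square_edges :: "nat \<Rightarrow> nat \<Rightarrow> (nat \<times> nat) set set" where
  "unit_square_edges i j =
     {{(i, j), (i, j + 1)}, {(i + 1, j), (i + 1, j + 1)}, {(i, j), (i + 1, j)}, {(i, j + 1), (i + 1, j + 1)}}"

lemma grid_adj_two_steps:
  assumes "grid_adj (a1, a2) (x1, x2)" "grid_adj (x1, x2) (c1, c2)" "(a1, a2) \<noteq> (c1, c2)"
  shows "((a1 = c1 + 1 \<or> c1 = a1 + 1) \<and> (a2 = c2 + 1 \<or> c2 = a2 + 1) \<and>
            ((x1, x2) = (a1, c2) \<or> (x1, x2) = (c1, a2)))
       \<or> (a1 = c1 \<and> x1 = a1 \<and> 2 * x2 = a2 + c2) \<or> (a2 = c2 \<and> x2 = a2 \<and> 2 * x1 = a1 + c1)"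
  using assms unfolding grid_adj_iff by (elim disjE conjE; clarsimp)

lemma grid_4cycle_unit_square:
  assumes "grid_adj a b" "grid_adj b c" "grid_adj c d" "grid_adj d a" "a \<noteq> c" "b \<noteq> d"
  obtains i j where "{{a, b}, {b, c}, {c, d}, {d, a}} = unit_square_edges i j"
    and "{(i, j), (i + 1, j + 1)} \<subseteq> {a, b, c, d}"
proof -
  obtain a1 a2 c1 c2 where a: "a = (a1, a2)" and c: "c = (c1, c2)" by (cases a, cases c)
  obtain b1 b2 d1 d2 where b: "b = (b1, b2)" and d: "d = (d1, d2)" by (cases b, cases d)
  note adj = assms(1-4)[unfolded a b c d]
  have "(a1, a2) \<noteq> (c1, c2)" using assms(5) a c by simp
  note via_b = grid_adj_two_steps[OF adj(1,2) this]
    and via_d = grid_adj_two_steps[OF grid_adj_sym[OF adj(4)] grid_adj_sym[OF adj(3)] this]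
  have "a1 \<noteq> c1 \<and> a2 \<noteq> c2"
  proof (rule ccontr)
    assume "\<not> (a1 \<noteq> c1 \<and> a2 \<noteq> c2)"
    then have "b = d" using via_b via_d b d by auto
    with assms(6) show False ..
  qed
  then have "a1 = c1 + 1 \<or> c1 = a1 + 1" "a2 = c2 + 1 \<or> c2 = a2 + 1"
    "(b = (a1, c2) \<and> d = (c1, a2)) \<or> (b = (c1, a2) \<and> d = (a1, c2))"
    using via_b via_d assms(6) b d by auto
  then show ?thesis
    using that unfolding a c unit_square_edges_def
    by (elim disjE conjE) (simp_all add: insert_commute)
qed

lemma grid_E_2_2:
  "grid_E 2 2 = {{(1, 1), (1, 2)}, {(1, 2), (2, 2)}, {(2, 2), (2, 1)}, {(2, 1), (1, 1)}}"
proof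
  show "grid_E 2 2 \<subseteq> {{(1, 1), (1, 2)}, {(1, 2), (2, 2)}, {(2, 2), (2, 1)}, {(2, 1), (1, 1)}}"
  proof
    fix e assume "e \<in> grid_E 2 2"
    then obtain p q where e: "e = {p, q}" and V: "p \<in> grid_V 2 2" "q \<in> grid_V 2 2"
      and "grid_adj p q" by (rule grid_EE)
    from this(4) show "e \<in> {{(1, 1), (1, 2)}, {(1, 2), (2, 2)}, {(2, 2), (2, 1)}, {(2, 1), (1, 1)}}"
      by (cases rule: grid_adjE) (use V in \<open>auto simp: e grid_V_def doubleton_eq_iff\<close>)
  qed
qed (auto simp: mem_grid_E_iff grid_V_def grid_adj_def)

lemma Q2_copy_4cycle:
  assumes "is_subgraph H (Grid n1 n2)" "graph_iso Q2 H"
  obtains a b c d where "grid_adj a b" "grid_adj b c" "grid_adj c d" "grid_adj d a"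
    "a \<noteq> c" "b \<noteq> d" "{a, b, c, d} \<subseteq> grid_V n1 n2"
    "snd H = {{a, b}, {b, c}, {c, d}, {d, a}}"
proof -
  obtain f where f_bij: "bij_betw f (grid_V 2 2) (fst H)"
    and f_edge: "\<And>x y. x \<in> grid_V 2 2 \<Longrightarrow> y \<in> grid_V 2 2 \<Longrightarrow>
                   {x, y} \<in> grid_E 2 2 \<longleftrightarrow> {f x, f y} \<in> snd H"
    using assms(2) unfolding graph_iso_def Q2_def Grid_def by auto
  have H_sub: "snd H \<subseteq> grid_E n1 n2" "\<And>e. e \<in> snd H \<Longrightarrow> e \<subseteq> fst H"
    using assms(1) unfolding is_subgraph_def Grid_def by auto
  have "snd H = image f ` grid_E 2 2"
  proof
    show "snd H \<subseteq> image f ` grid_E 2 2"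
    proof
      fix e assume e: "e \<in> snd H"
      then obtain x y where xy: "e = {x, y}" using H_sub(1) grid_EE by blast
      then have "x \<in> f ` grid_V 2 2" "y \<in> f ` grid_V 2 2"
        using H_sub(2)[OF e] bij_betw_imp_surj_on[OF f_bij] by auto
      then obtain p q where pq: "p \<in> grid_V 2 2" "q \<in> grid_V 2 2" and "x = f p" "y = f q" by blast
      then have "{p, q} \<in> grid_E 2 2" using f_edge[OF pq] e xy by simp
      moreover have "e = f ` {p, q}" using \<open>x = f p\<close> \<open>y = f q\<close> xy by simp
      ultimately show "e \<in> image f ` grid_E 2 2" by (rule rev_image_eqI)
    qed
    show "image f ` grid_E 2 2 \<subseteq> snd H"
    proof
      fix e assume "e \<in> image f ` grid_E 2 2"
      then obtain e' where e': "e' \<in> grid_E 2 2" and e: "e = f ` e'" by blast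
      from e' obtain p q where pq: "e' = {p, q}" "p \<in> grid_V 2 2" "q \<in> grid_V 2 2" by (rule grid_EE)
      then have "{f p, f q} \<in> snd H" using f_edge[OF pq(2,3)] e' by blast
      then show "e \<in> snd H" using e pq(1) by simp
    qed
  qed
  define a b c d where "a = f (1, 1)" and "b = f (1, 2)" and "c = f (2, 2)" and "d = f (2, 1)"
  have edges: "snd H = {{a, b}, {b, c}, {c, d}, {d, a}}"
    unfolding \<open>snd H = image f ` grid_E 2 2\<close> grid_E_2_2 a_def b_def c_def d_def by simp
  have "inj_on f (grid_V 2 2)" using f_bij bij_betw_imp_inj_on by blast
  then have distinct: "a \<noteq> c" "b \<noteq> d"
    unfolding a_def b_def c_def d_def by (simp_all add: inj_on_contraD grid_V_def)
  have "{{a, b}, {b, c}, {c, d}, {d, a}} \<subseteq> grid_E n1 n2" using H_sub(1) edges by simp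
  then have "grid_adj a b" "grid_adj b c" "grid_adj c d" "grid_adj d a" "{a, b, c, d} \<subseteq> grid_V n1 n2"
    by (simp_all add: mem_grid_E_iff)
  from that[OF this(1-4) distinct this(5) edges] show ?thesis .
qed

lemma Q2_copy_unit_square:
  assumes "is_subgraph H (Grid n1 n2)" "graph_iso Q2 H"
  obtains i j where "1 \<le> i" "i + 1 \<le> n1" "1 \<le> j" "j + 1 \<le> n2" "snd H = unit_square_edges i j"
proof -
  obtain a b c d
    where cycle: "grid_adj a b" "grid_adj b c" "grid_adj c d" "grid_adj d a" "a \<noteq> c" "b \<noteq> d"
    and V: "{a, b, c, d} \<subseteq> grid_V n1 n2" and E: "snd H = {{a, b}, {b, c}, {c, d}, {d, a}}"
    using Q2_copy_4cycle[OF assms] .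
  obtain i j where square: "snd H = unit_square_edges i j"
    and corners: "{(i, j), (i + 1, j + 1)} \<subseteq> {a, b, c, d}"
    using grid_4cycle_unit_square[OF cycle] unfolding E .
  from order_trans[OF corners V] have "1 \<le> i" "i + 1 \<le> n1" "1 \<le> j" "j + 1 \<le> n2"
    by (simp_all add: grid_V_def)
  from that[OF this square] show ?thesis .
qed

locale grid_labeling =
  fixes n1 n2 :: nat and g :: "(nat \<times> nat) set \<Rightarrow> nat"
  assumes g_hedge: "\<And>i j. i \<in> {1..n1} \<Longrightarrow> j \<in> {1..n2 - 1} \<Longrightarrow>
             g {(i, j), (i, j + 1)} = (i - 1) * (2 * n2 - 1) + j"
    and g_vedge: "\<And>i j. i \<in> {1..n1 - 1} \<Longrightarrow> j \<in> {1..n2} \<Longrightarrow>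
             g {(i, j), (i + 1, j)} = (n1 - i) * (2 * n2 - 1) + 1 - j"
begin

lemma sum_unit_square:
  assumes "1 \<le> i" "i + 1 \<le> n1" "1 \<le> j" "j + 1 \<le> n2"
  shows "(\<Sum>e\<in>unit_square_edges i j. g e) = (2 * n1 - 1) * (2 * n2 - 1) + 1"
proof -
  define B where "B = 2 * n2 - 1"
  have "(\<Sum>e\<in>unit_square_edges i j. g e) =
      g {(i, j), (i, j + 1)} + g {(i + 1, j), (i + 1, j + 1)} +
      g {(i, j), (i + 1, j)} + g {(i, j + 1), (i + 1, j + 1)}"
    by (simp add: unit_square_edges_def doubleton_eq_iff)
  also have "\<dots> = ((i - 1) * B + j) + (i * B + j) +
      ((n1 - i) * B + 1 - j) + ((n1 - i) * B + 1 - (j + 1))"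
    using assms g_hedge[of i j] g_hedge[of "i + 1" j] g_vedge[of i j] g_vedge[of i "j + 1"]
    unfolding B_def by simp
  also have "\<dots> = (2 * n1 - 1) * B + 1"
  proof -
    obtain i' where i: "i = Suc i'" using assms(1) by (cases i) auto
    obtain m where n1: "n1 = i + 1 + m" using assms(2) le_iff_add by blast
    have "j + 1 \<le> B" "B \<le> (m + 1) * B" using assms(4) B_def by simp_all
    then show ?thesis unfolding n1 i by (simp add: algebra_simps)
  qed
  finally show ?thesis unfolding B_def .
qed

lemma image_grid_E_subset:
  "g ` grid_E n1 n2 \<subseteq> {1..n1 * (n2 - 1) + (n1 - 1) * n2}"
proof
  define B where "B = 2 * n2 - 1"
  fix k assume "k \<in> g ` grid_E n1 n2"
  then obtain e where e: "e \<in> grid_hedges n1 n2 \<union> grid_vedges n1 n2" and k: "k = g e"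
    unfolding grid_E_eq_hedges_Un_vedges by blast
  show "k \<in> {1..n1 * (n2 - 1) + (n1 - 1) * n2}"
  proof (cases "e \<in> grid_hedges n1 n2")
    case True
    then obtain i j where ij: "i \<in> {1..n1}" "j \<in> {1..n2 - 1}" and "e = {(i, j), (i, j + 1)}"
      unfolding grid_hedges_def by blast
    then have "k = (i - 1) * B + j" using k g_hedge B_def by simp
    moreover have "(i - 1) * B \<le> (n1 - 1) * B" using ij by (intro mult_le_mono1) auto
    moreover have "n1 * (n2 - 1) + (n1 - 1) * n2 = (n1 - 1) * B + (n2 - 1)"
      using ij by (intro grid_edge_count_eq[of n1 n2, folded B_def]) auto
    ultimately show ?thesis using ij unfolding atLeastAtMost_iff by linarith
  next
    case False
    then obtain i j where ij: "i \<in> {1..n1 - 1}" "j \<in> {1..n2}" and "e = {(i, j), (i + 1, j)}"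
      using e unfolding grid_vedges_def by blast
    then have "k = (n1 - i) * B + 1 - j" using k g_vedge B_def by simp
    moreover have i_bounds: "1 \<le> n1 - i" "n1 - i \<le> n1 - 1" using ij by auto
    moreover have "1 * B \<le> (n1 - i) * B" using i_bounds(1) by (rule mult_le_mono1)
    moreover have "(n1 - i) * B \<le> (n1 - 1) * B" using i_bounds(2) by (rule mult_le_mono1)
    moreover have "j \<le> B" using ij unfolding B_def atLeastAtMost_iff by linarith
    moreover have "n1 * (n2 - 1) + (n1 - 1) * n2 = (n1 - 1) * B + (n2 - 1)"
      using ij by (intro grid_edge_count_eq[of n1 n2, folded B_def]) auto
    ultimately show ?thesis using ij unfolding atLeastAtMost_iff by linarith
  qed
qed

lemma interval_subset_image_grid_E:
  "{1..n1 * (n2 - 1) + (n1 - 1) * n2} \<subseteq> g ` grid_E n1 n2"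
proof
  define B where "B = 2 * n2 - 1"
  fix k assume k: "k \<in> {1..n1 * (n2 - 1) + (n1 - 1) * n2}"
  then have "1 \<le> n1" "1 \<le> n2" by (cases "n1 = 0"; cases "n2 = 0"; simp)+
  then have N: "n1 * (n2 - 1) + (n1 - 1) * n2 = (n1 - 1) * B + (n2 - 1)" and "n2 - 1 < B"
    using grid_edge_count_eq B_def by auto
  define q r where "q = (k - 1) div B" and "r = (k - 1) mod B"
  have k_qr: "k = q * B + r + 1" and "r < B"
    using k \<open>n2 - 1 < B\<close> unfolding q_def r_def by auto
  have "k \<le> (n1 - 1) * B + (n2 - 1)" using k N by simp
  then have "q * B < n1 * B"
    using k_qr \<open>n2 - 1 < B\<close> \<open>1 \<le> n1\<close> by (cases n1) (simp_all add: algebra_simps)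
  then have "q < n1" by simp
  show "k \<in> g ` grid_E n1 n2"
  proof (cases "r < n2 - 1")
    case True
    then have "{(q + 1, r + 1), (q + 1, r + 1 + 1)} \<in> grid_hedges n1 n2"
      using \<open>q < n1\<close> unfolding grid_hedges_def by (auto intro!: image_eqI[of _ _ "(q + 1, r + 1)"])
    moreover have "g {(q + 1, r + 1), (q + 1, r + 1 + 1)} = k"
      using g_hedge[of "q + 1" "r + 1", folded B_def] True \<open>q < n1\<close> k_qr by simp
    ultimately show ?thesis unfolding grid_E_eq_hedges_Un_vedges by blast
  next
    case False
    have "q + 2 \<le> n1"
    proof (rule ccontr)
      assume "\<not> q + 2 \<le> n1"
      then have "q = n1 - 1" using \<open>q < n1\<close> by simp
      then show False using \<open>k \<le> (n1 - 1) * B + (n2 - 1)\<close> k_qr False by simp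
    qed
    define i j where "i = n1 - 1 - q" and "j = B - r"
    have ij: "i \<in> {1..n1 - 1}" "j \<in> {1..n2}" "n1 - i = q + 1"
      using \<open>q + 2 \<le> n1\<close> False \<open>r < B\<close> B_def unfolding i_def j_def atLeastAtMost_iff by linarith+
    then have "{(i, j), (i + 1, j)} \<in> grid_vedges n1 n2"
      unfolding grid_vedges_def by (auto intro!: image_eqI[of _ _ "(i, j)"])
    moreover have "g {(i, j), (i + 1, j)} = k"
    proof -
      have "g {(i, j), (i + 1, j)} = q * B + B + 1 - j"
        using g_vedge[OF ij(1,2), folded B_def] ij(3) by simp
      then show ?thesis using k_qr \<open>r < B\<close> unfolding j_def by linarith
    qed
    ultimately show ?thesis unfolding grid_E_eq_hedges_Un_vedges by blast
  qed
qed

end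

theorem lemma4:
  fixes n1 n2 :: nat and g :: "(nat \<times> nat) set \<Rightarrow> nat"
  assumes "n1 \<ge> n2" and "n2 \<ge> 2"
    and "\<And>i j. i \<in> {1..n1} \<Longrightarrow> j \<in> {1..n2 - 1} \<Longrightarrow>
           g {(i, j), (i, j + 1)} = (i - 1) * (2 * n2 - 1) + j"
    and "\<And>i j. i \<in> {1..n1 - 1} \<Longrightarrow> j \<in> {1..n2} \<Longrightarrow>
           g {(i, j), (i + 1, j)} = (n1 - i) * (2 * n2 - 1) + 1 - j"
  shows "magic_edge_labeling Q2 (Grid n1 n2) g ((2 * n1 - 1) * (2 * n2 - 1) + 1)"
proof -
  interpret grid_labeling n1 n2 g
    using assms(3,4) by unfold_locales
  have "bij_betw g (grid_E n1 n2) {1..card (grid_E n1 n2)}"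
    using image_grid_E_subset interval_subset_image_grid_E
    by (intro bij_betw_interval_if_card_le[OF finite_grid_E card_grid_E_le]) (rule subset_antisym)
  moreover have "(\<Sum>e\<in>snd H. g e) = (2 * n1 - 1) * (2 * n2 - 1) + 1"
    if copy: "is_subgraph H (Grid n1 n2)" "graph_iso Q2 H" for H
  proof -
    obtain i j where "1 \<le> i" "i + 1 \<le> n1" "1 \<le> j" "j + 1 \<le> n2" "snd H = unit_square_edges i j"
      using Q2_copy_unit_square[OF copy] .
    then show ?thesis using sum_unit_square by simp
  qed
  ultimately show ?thesis
    unfolding magic_edge_labeling_def Grid_def by simp
qed

end
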